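(* Let $\nu\in\left(-1,-\tfrac12\right)$. Then there exists $z_\nu\ge j_{\nu,1}$ such that $x\mapsto\mathcal{I}_\nu(x)$ is strictly log-convex on $(0,z_\nu)$ and strictly log-concave on $(z_\nu,\infty)$. In particular, $\mathcal{I}_\nu$ is not log-convex on all of $\mathbb{R}$ for such $\nu$.
   Context: For $\nu>-1$ define $\mathcal{I}_\nu:\mathbb{R}\to[1,\infty)$ by $\mathcal{I}_\nu(x)=\sum_{n\ge0}\frac{(1/4)^n}{(\nu+1)_n\, n!}x^{2n}$, where $(a)_n=a(a+1)\cdots(a+n-1)$, $(a)_0=1$; equivalently $\mathcal{I}_\nu(x)=2^\nu\Gamma(\nu+1)x^{-\nu}I_\nu(x)$ for $x>0$, with $I_\nu$ the modified Bessel function of the first kind. $j_{\nu,1}$ is the first positive zero of the Bessel function of the first kind $J_\nu$. *)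

theory Defs
  imports "HOL-Analysis.Analysis"
begin

definition calI :: "real \<Rightarrow> real \<Rightarrow> real" where
  "calI \<nu> x = (\<Sum>n. (1/4) ^ n / (pochhammer (\<nu> + 1) n * fact n) * x ^ (2 * n))"

text \<open>Bessel function of the first kind, for x > 0.\<close>
definition besselJ :: "real \<Rightarrow> real \<Rightarrow> real" where
  "besselJ \<nu> x = (\<Sum>n. (-1) ^ n / (fact n * Gamma (real n + \<nu> + 1)) * (x / 2) powr (2 * real n + \<nu>))"

definition first_zero_J :: "real \<Rightarrow> real" where
  "first_zero_J \<nu> = (THE j. 0 < j \<and> besselJ \<nu> j = 0 \<and> (\<forall>x. 0 < x \<and> x < j \<longrightarrow> besselJ \<nu> x \<noteq> 0))"

definition strict_convex_on :: "real set \<Rightarrow> (real \<Rightarrow> real) \<Rightarrow> bool" where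
  "strict_convex_on S f \<longleftrightarrow> convex S \<and>
    (\<forall>x\<in>S. \<forall>y\<in>S. \<forall>u::real. x \<noteq> y \<and> 0 < u \<and> u < 1 \<longrightarrow>
       f (u * x + (1 - u) * y) < u * f x + (1 - u) * f y)"

definition strict_concave_on :: "real set \<Rightarrow> (real \<Rightarrow> real) \<Rightarrow> bool" where
  "strict_concave_on S f \<longleftrightarrow> strict_convex_on S (\<lambda>x. - f x)"

end

theory Submission
  imports Defs
begin

text \<open>
  Write \<open>\<mu> = \<nu> + 1\<close>, \<open>F = calI \<nu>\<close> and \<open>G = calI (\<nu> + 1)\<close>.  Termwise differentiation
  of the power series gives \<open>F' = x G / (2\<mu>)\<close> and \<open>x G' = 2\<mu> (F - G)\<close>, hence
  \<open>(ln F)'' = \<Delta> / (2\<mu>F)\<^sup>2\<close> with \<open>\<Delta> = 4\<mu>\<^sup>2F\<^sup>2 - 2(2\<nu>+1)\<mu>FG - x\<^sup>2G\<^sup>2\<close>.  The weight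
  \<open>x\<^bsup>2\<nu>+1\<^esup>\<close> is chosen so that \<open>(x\<^bsup>2\<nu>+1\<^esup> \<Delta>)' = 2(2\<nu>+1)\<mu> x\<^bsup>2\<nu>\<^esup> F G\<close>, which is
  negative for \<open>\<nu> < -1/2\<close>; so \<open>\<Delta>\<close> has at most one sign change on \<open>(0,\<infinity>)\<close>.  Truncating
  the series at the test point \<open>x\<^sub>0 = 2\<surd>(\<mu>(\<mu>+1))\<close> shows \<open>\<Delta>(x\<^sub>0) > 0\<close>, while \<open>\<Delta>\<close> is
  eventually negative, so the sign change happens at some \<open>z > x\<^sub>0\<close>.  At the same point the
  alternating series of \<open>J\<^sub>\<nu>\<close> is already negative, so \<open>j\<^sub>\<nu>\<^sub>,\<^sub>1 < x\<^sub>0 < z\<close>.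
\<close>

section \<open>Elementary real analysis\<close>

lemma continuous_on_first_root:
  fixes g :: "real \<Rightarrow> real"
  assumes "continuous_on {a..b} g" "a \<le> b" "g a > 0" "g b < 0"
  obtains j where "a < j" "j \<le> b" "g j = 0" "\<And>x. a < x \<Longrightarrow> x < j \<Longrightarrow> g x \<noteq> 0"
proof -
  define Z where "Z = {x \<in> {a..b}. g x = 0}"
  have "Z \<noteq> {}"
    using IVT2'[of g b 0 a] assms unfolding Z_def by force
  moreover have "bdd_below Z"
    unfolding Z_def by (rule bdd_belowI[of _ a]) auto
  moreover have "closed Z"
    unfolding Z_def using assms(1) by (intro continuous_closed_preimage_constant) auto
  ultimately have "Inf Z \<in> Z"
    by (rule closed_contains_Inf)
  then have j: "a \<le> Inf Z" "Inf Z \<le> b" "g (Inf Z) = 0"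
    unfolding Z_def by auto
  show ?thesis
  proof (rule that[of "Inf Z"])
    show "a < Inf Z"
      using j assms(3) by (cases "a = Inf Z") auto
    show "g x \<noteq> 0" if "a < x" "x < Inf Z" for x
    proof
      assume "g x = 0"
      then have "x \<in> Z" unfolding Z_def using that j by auto
      then have "Inf Z \<le> x" by (rule cInf_lower) fact
      with that show False by simp
    qed
  qed (use j in auto)
qed

lemma sign_change_if_strict_antimono:
  fixes W :: "real \<Rightarrow> real"
  assumes dec: "\<And>x y. 0 < x \<Longrightarrow> x < y \<Longrightarrow> W y < W x"
    and "continuous_on {a..b} W" "0 < a" "a \<le> b" "W a > 0" "W b < 0"
  obtains z where "a < z" "\<And>x. 0 < x \<Longrightarrow> x < z \<Longrightarrow> W x > 0" "\<And>x. z < x \<Longrightarrow> W x < 0"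
proof -
  obtain z where z: "a < z" "W z = 0"
    using continuous_on_first_root[of a b W] assms by metis
  show ?thesis
  proof (rule that[OF z(1)])
    show "W x > 0" if "0 < x" "x < z" for x
      using dec[OF that] z by simp
    show "W x < 0" if "z < x" for x
      using dec[of z x] z that assms(3) by simp
  qed
qed

lemma exists_neg_if_deriv_le_neg:
  fixes f :: "real \<Rightarrow> real"
  assumes "c > 0"
    and deriv: "\<And>t. a \<le> t \<Longrightarrow> (f has_real_derivative f' t) (at t)"
    and slope: "\<And>t. a \<le> t \<Longrightarrow> f' t \<le> - c"
  shows "\<exists>b > a. f b < 0"
proof -
  define b where "b = a + (\<bar>f a\<bar> + 1) / c"
  have "a < b"
    unfolding b_def using assms(1) by simp
  then obtain \<xi> where \<xi>: "a < \<xi>" "f b - f a = (b - a) * f' \<xi>"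
    using MVT2[OF \<open>a < b\<close>] deriv by force
  have "(b - a) * f' \<xi> \<le> (b - a) * (- c)"
    using slope[of \<xi>] \<xi>(1) \<open>a < b\<close> by (intro mult_left_mono) auto
  also have "\<dots> = - (\<bar>f a\<bar> + 1)"
    unfolding b_def using assms(1) by simp
  finally have "f b < 0"
    using \<xi>(2) by linarith
  with \<open>a < b\<close> show ?thesis by blast
qed

lemma chord_lt_if_deriv_strict_mono:
  fixes f :: "real \<Rightarrow> real"
  assumes deriv: "\<And>x. a \<le> x \<Longrightarrow> x \<le> b \<Longrightarrow> (f has_real_derivative f' x) (at x)"
    and mono: "\<And>x y. a < x \<Longrightarrow> x < y \<Longrightarrow> y < b \<Longrightarrow> f' x < f' y"
    and "a < b" "0 < u" "u < 1"
  shows "f (u * a + (1 - u) * b) < u * f a + (1 - u) * f b"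
proof -
  define m where "m = u * a + (1 - u) * b"
  have ma: "m - a = (1 - u) * (b - a)"
    by (simp add: m_def algebra_simps)
  have bm: "b - m = u * (b - a)"
    by (simp add: m_def algebra_simps)
  have "0 < (1 - u) * (b - a)"
    using assms by simp
  with ma have am: "a < m" by linarith
  have "0 < u * (b - a)"
    using assms by simp
  with bm have mb: "m < b" by linarith
  have "(f has_real_derivative f' x) (at x)" if "a \<le> x" "x \<le> m" for x
    using deriv that mb by simp
  then obtain \<xi>\<^sub>1 where \<xi>\<^sub>1: "a < \<xi>\<^sub>1" "\<xi>\<^sub>1 < m" "f m - f a = (m - a) * f' \<xi>\<^sub>1"
    using MVT2[OF am] by blast
  have "(f has_real_derivative f' x) (at x)" if "m \<le> x" "x \<le> b" for x
    using deriv that am by simp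
  then obtain \<xi>\<^sub>2 where \<xi>\<^sub>2: "m < \<xi>\<^sub>2" "\<xi>\<^sub>2 < b" "f b - f m = (b - m) * f' \<xi>\<^sub>2"
    using MVT2[OF mb] by blast
  have "f' \<xi>\<^sub>1 < f' \<xi>\<^sub>2"
    using \<xi>\<^sub>1 \<xi>\<^sub>2 by (intro mono) auto
  then have "0 < u * (1 - u) * (b - a) * (f' \<xi>\<^sub>2 - f' \<xi>\<^sub>1)"
    using assms by simp
  also have "\<dots> = u * (- ((m - a) * f' \<xi>\<^sub>1)) + (1 - u) * ((b - m) * f' \<xi>\<^sub>2)"
    unfolding ma bm by (simp add: algebra_simps)
  also have "\<dots> = u * (f a - f m) + (1 - u) * (f b - f m)"
  proof -
    have "f a - f m = - ((m - a) * f' \<xi>\<^sub>1)"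
      using \<xi>\<^sub>1(3) by simp
    then show ?thesis
      using \<xi>\<^sub>2(3) by simp
  qed
  finally show ?thesis
    unfolding m_def by (simp add: algebra_simps)
qed

lemma strict_convex_on_if_second_deriv_pos:
  fixes f :: "real \<Rightarrow> real"
  assumes S: "convex S"
    and f': "\<And>x. x \<in> S \<Longrightarrow> (f has_real_derivative f' x) (at x)"
    and f'': "\<And>x. x \<in> S \<Longrightarrow> (f' has_real_derivative f'' x) (at x)"
    and pos: "\<And>x. x \<in> S \<Longrightarrow> f'' x > 0"
  shows "strict_convex_on S f"
proof -
  have between: "c \<in> S" if "a \<in> S" "b \<in> S" "a \<le> c" "c \<le> b" for a b c
    using S that by (metis is_interval_convex_1 mem_is_interval_1_I)
  have chord: "f (u * a + (1 - u) * b) < u * f a + (1 - u) * f b"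
    if ab: "a \<in> S" "b \<in> S" "a < b" and u: "0 < u" "u < 1" for a b u
  proof (rule chord_lt_if_deriv_strict_mono[OF f' _ \<open>a < b\<close> u])
    show "x \<in> S" if "a \<le> x" "x \<le> b" for x
      using between[OF ab(1,2) that] .
    show "f' x < f' y" if "a < x" "x < y" "y < b" for x y
    proof (rule DERIV_pos_imp_increasing[OF \<open>x < y\<close>])
      fix t assume "x \<le> t" "t \<le> y"
      then have "t \<in> S" using between[OF ab(1,2)] that by auto
      then show "\<exists>D. (f' has_real_derivative D) (at t) \<and> D > 0"
        using f'' pos by blast
    qed
  qed
  show ?thesis
    unfolding strict_convex_on_def
  proof (intro conjI S ballI allI impI)
    fix x y u :: real assume xy: "x \<in> S" "y \<in> S" and u: "x \<noteq> y \<and> 0 < u \<and> u < 1"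
    show "f (u * x + (1 - u) * y) < u * f x + (1 - u) * f y"
    proof (cases "x < y")
      case True
      then show ?thesis using chord xy u by blast
    next
      case False
      then have "f ((1 - u) * y + (1 - (1 - u)) * x) < (1 - u) * f y + (1 - (1 - u)) * f x"
        using chord[of y x "1 - u"] xy u by simp
      then show ?thesis by (simp add: algebra_simps)
    qed
  qed
qed

lemma strict_concave_on_imp_not_convex_on:
  assumes "strict_concave_on S f" "x \<in> S" "y \<in> S" "x \<noteq> y" "S \<subseteq> T"
  shows "\<not> convex_on T f"
proof
  assume convex: "convex_on T f"
  have "f ((1 - 1/2) *\<^sub>R y + (1/2) *\<^sub>R x) \<le> (1 - 1/2) * f y + (1/2) * f x"
    by (rule convex_onD[OF convex]) (use assms in auto)
  moreover have "- f ((1/2) * x + (1 - 1/2) * y) < (1/2) * - f x + (1 - 1/2) * - f y"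
  proof -
    have strict: "\<forall>x\<in>S. \<forall>y\<in>S. \<forall>u. x \<noteq> y \<and> 0 < u \<and> u < 1 \<longrightarrow>
            - f (u * x + (1 - u) * y) < u * - f x + (1 - u) * - f y"
      using assms(1) unfolding strict_concave_on_def strict_convex_on_def by blast
    show ?thesis
      by (rule strict[rule_format]) (use assms in auto)
  qed
  ultimately show False by (simp add: algebra_simps)
qed


section \<open>The confluent hypergeometric limit function\<close>

definition hyp0F1_coeff :: "real \<Rightarrow> nat \<Rightarrow> real" where
  "hyp0F1_coeff \<mu> n = 1 / (pochhammer \<mu> n * fact n)"

definition hyp0F1 :: "real \<Rightarrow> real \<Rightarrow> real" where
  "hyp0F1 \<mu> t = (\<Sum>n. hyp0F1_coeff \<mu> n * t ^ n)"

lemma pochhammer_ge_min_1: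
  assumes "\<mu> > 0" shows "min 1 \<mu> \<le> pochhammer (\<mu>::real) n"
proof (induction n)
  case (Suc n)
  show ?case
  proof (cases n)
    case (Suc m)
    have "pochhammer \<mu> n \<le> pochhammer \<mu> n * (\<mu> + real n)"
      using pochhammer_pos[OF assms, of n] Suc assms by (intro mult_le_cancel_left1[THEN iffD2]) auto
    with Suc.IH show ?thesis by (simp add: pochhammer_Suc)
  qed (simp add: pochhammer_Suc)
qed simp

lemma hyp0F1_coeff_pos: "\<mu> > 0 \<Longrightarrow> hyp0F1_coeff \<mu> n > 0"
  unfolding hyp0F1_coeff_def using pochhammer_pos[of \<mu> n] by simp

lemma hyp0F1_coeff_0 [simp]: "hyp0F1_coeff \<mu> 0 = 1"
  by (simp add: hyp0F1_coeff_def)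

lemma hyp0F1_coeff_Suc:
  assumes "\<mu> > 0"
  shows "hyp0F1_coeff \<mu> (Suc n) = hyp0F1_coeff \<mu> n / ((\<mu> + real n) * real (Suc n))"
  using pochhammer_pos[OF assms, of n] assms unfolding hyp0F1_coeff_def
  by (simp add: pochhammer_Suc field_simps)

lemma hyp0F1_coeff_diffs: "diffs (hyp0F1_coeff \<mu>) n = hyp0F1_coeff (\<mu> + 1) n / \<mu>"
proof -
  have "diffs (hyp0F1_coeff \<mu>) n = real (Suc n) / (real (Suc n) * (\<mu> * pochhammer (\<mu> + 1) n * fact n))"
    by (simp add: diffs_def hyp0F1_coeff_def pochhammer_rec mult_ac)
  then show ?thesis
    by (simp add: hyp0F1_coeff_def)
qed

lemma summable_hyp0F1:
  assumes "\<mu> > 0" shows "summable (\<lambda>n. hyp0F1_coeff \<mu> n * t ^ n)"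
proof (rule summable_comparison_test)
  let ?C = "1 / min 1 \<mu>"
  show "summable (\<lambda>n. ?C * (inverse (fact n) * \<bar>t\<bar> ^ n))"
    by (intro summable_mult summable_exp)
  show "\<exists>N. \<forall>n\<ge>N. norm (hyp0F1_coeff \<mu> n * t ^ n) \<le> ?C * (inverse (fact n) * \<bar>t\<bar> ^ n)"
  proof (intro exI allI impI)
    fix n :: nat
    have "hyp0F1_coeff \<mu> n \<le> ?C * inverse (fact n)"
      unfolding hyp0F1_coeff_def using pochhammer_ge_min_1[OF assms, of n] assms
      by (simp add: field_simps)
    then have "hyp0F1_coeff \<mu> n * \<bar>t\<bar> ^ n \<le> ?C * inverse (fact n) * \<bar>t\<bar> ^ n"
      by (rule mult_right_mono) simp
    then show "norm (hyp0F1_coeff \<mu> n * t ^ n) \<le> ?C * (inverse (fact n) * \<bar>t\<bar> ^ n)"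
      using hyp0F1_coeff_pos[OF assms, of n] by (simp add: abs_mult power_abs)
  qed
qed

lemma hyp0F1_has_real_derivative:
  assumes "\<mu> > 0"
  shows "(hyp0F1 \<mu> has_real_derivative hyp0F1 (\<mu> + 1) t / \<mu>) (at t)"
proof -
  have "(hyp0F1 \<mu> has_real_derivative (\<Sum>n. diffs (hyp0F1_coeff \<mu>) n * t ^ n)) (at t)"
    unfolding hyp0F1_def[abs_def]
    by (rule termdiffs_strong_converges_everywhere) (rule summable_hyp0F1[OF assms])
  moreover have "(\<Sum>n. diffs (hyp0F1_coeff \<mu>) n * t ^ n) = hyp0F1 (\<mu> + 1) t / \<mu>"
    unfolding hyp0F1_coeff_diffs hyp0F1_def using summable_hyp0F1[of "\<mu> + 1" t] assms
    by (simp add: suminf_divide[symmetric])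
  ultimately show ?thesis by simp
qed

lemma continuous_on_hyp0F1: "\<mu> > 0 \<Longrightarrow> continuous_on S (hyp0F1 \<mu>)"
  by (intro continuous_at_imp_continuous_on ballI DERIV_isCont[OF hyp0F1_has_real_derivative])

lemma hyp0F1_coeff_contiguous:
  assumes "\<mu> > 0"
  shows "hyp0F1_coeff \<mu> (Suc n) - hyp0F1_coeff (\<mu> + 1) (Suc n)
           = hyp0F1_coeff (\<mu> + 2) n / (\<mu> * (\<mu> + 1))"
proof -
  define P where "P = pochhammer (\<mu> + 2) n"
  have P: "P > 0" unfolding P_def using assms by (intro pochhammer_pos) simp
  have P1: "pochhammer (\<mu> + 1) (Suc n) = (\<mu> + 1) * P"
    unfolding P_def by (simp add: pochhammer_rec add.assoc)
  have "pochhammer (\<mu> + 1) n * (\<mu> + 1 + real n) = (\<mu> + 1) * P"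
    using P1 by (simp add: pochhammer_Suc)
  then have P0: "pochhammer \<mu> (Suc n) = \<mu> * (\<mu> + 1) * P / (\<mu> + 1 + real n)"
    using assms by (simp add: pochhammer_rec field_simps)
  define D where "D = \<mu> * (\<mu> + 1) * P * (real n + 1) * fact n"
  have "hyp0F1_coeff \<mu> (Suc n) = (\<mu> + 1 + real n) / D"
    unfolding hyp0F1_coeff_def P0 D_def using P assms by (simp add: field_simps)
  moreover have "hyp0F1_coeff (\<mu> + 1) (Suc n) = \<mu> / D"
  proof -
    have "\<mu> / D = \<mu> / (\<mu> * ((\<mu> + 1) * P * (real n + 1) * fact n))"
      unfolding D_def by (simp only: mult.assoc)
    also have "\<dots> = hyp0F1_coeff (\<mu> + 1) (Suc n)"
      unfolding hyp0F1_coeff_def P1 using assms by (simp add: mult_ac)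
    finally show ?thesis ..
  qed
  moreover have "(real n + 1) / D = hyp0F1_coeff (\<mu> + 2) n / (\<mu> * (\<mu> + 1))"
  proof -
    have "(real n + 1) / D = (real n + 1) / ((real n + 1) * (\<mu> * (\<mu> + 1) * P * fact n))"
      unfolding D_def by (simp only: mult_ac)
    also have "\<dots> = hyp0F1_coeff (\<mu> + 2) n / (\<mu> * (\<mu> + 1))"
      unfolding hyp0F1_coeff_def P_def[symmetric] by (simp add: mult_ac)
    finally show ?thesis .
  qed
  ultimately show ?thesis
    by (simp add: diff_divide_distrib[symmetric] add_ac)
qed

lemma hyp0F1_contiguous:
  assumes "\<mu> > 0"
  shows "hyp0F1 \<mu> t = hyp0F1 (\<mu> + 1) t + t * hyp0F1 (\<mu> + 2) t / (\<mu> * (\<mu> + 1))"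
proof -
  define a where "a n = hyp0F1_coeff \<mu> n * t ^ n - hyp0F1_coeff (\<mu> + 1) n * t ^ n" for n
  have "a sums (hyp0F1 \<mu> t - hyp0F1 (\<mu> + 1) t)"
    unfolding a_def hyp0F1_def using assms
    by (intro sums_diff summable_sums summable_hyp0F1) auto
  moreover have "(\<lambda>n. a (Suc n)) sums (t * hyp0F1 (\<mu> + 2) t / (\<mu> * (\<mu> + 1)))"
  proof -
    have "(\<lambda>n. t * (hyp0F1_coeff (\<mu> + 2) n * t ^ n) / (\<mu> * (\<mu> + 1)))
            sums (t * hyp0F1 (\<mu> + 2) t / (\<mu> * (\<mu> + 1)))"
      unfolding hyp0F1_def using assms
      by (intro sums_divide sums_mult summable_sums summable_hyp0F1) auto
    moreover have "a (Suc n) = t * (hyp0F1_coeff (\<mu> + 2) n * t ^ n) / (\<mu> * (\<mu> + 1))" for n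
      using hyp0F1_coeff_contiguous[OF assms, of n] unfolding a_def
      by (simp add: left_diff_distrib[symmetric])
    ultimately show ?thesis by simp
  qed
  then have "a sums (t * hyp0F1 (\<mu> + 2) t / (\<mu> * (\<mu> + 1)) + a 0)"
    by (simp only: sums_Suc_iff)
  then have "a sums (t * hyp0F1 (\<mu> + 2) t / (\<mu> * (\<mu> + 1)))"
    by (simp add: a_def)
  ultimately show ?thesis
    using sums_unique2 by fastforce
qed

lemma hyp0F1_term_Suc:
  assumes "\<mu> > 0"
  shows "hyp0F1_coeff \<mu> (Suc n) * t ^ Suc n
           = hyp0F1_coeff \<mu> n * t ^ n * (t / ((\<mu> + real n) * real (Suc n)))"
  using assms by (simp add: hyp0F1_coeff_Suc)

lemma hyp0F1_term_ratio_le: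
  assumes "\<mu> > 0" "t \<ge> 0" "t \<le> c * ((\<mu> + real k) * real (Suc k))" "k \<le> n"
  shows "hyp0F1_coeff \<mu> (Suc n) * t ^ Suc n \<le> c * (hyp0F1_coeff \<mu> n * t ^ n)"
proof -
  have Dk: "(\<mu> + real k) * real (Suc k) > 0" and Dn: "(\<mu> + real n) * real (Suc n) > 0"
    using assms by auto
  have "(\<mu> + real k) * real (Suc k) \<le> (\<mu> + real n) * real (Suc n)"
    using assms by (intro mult_mono) auto
  moreover have "c \<ge> 0"
    using assms Dk by (meson order.trans zero_le_mult_iff not_le)
  ultimately have "t \<le> c * ((\<mu> + real n) * real (Suc n))"
    using assms(3) by (meson mult_left_mono order.trans)
  then have "t / ((\<mu> + real n) * real (Suc n)) \<le> c"
    using Dn by (simp add: divide_le_eq)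
  moreover have "hyp0F1_coeff \<mu> n * t ^ n \<ge> 0"
    using hyp0F1_coeff_pos[OF assms(1), of n] assms(2) by simp
  ultimately have "hyp0F1_coeff \<mu> n * t ^ n * (t / ((\<mu> + real n) * real (Suc n)))
                    \<le> hyp0F1_coeff \<mu> n * t ^ n * c"
    by (rule mult_left_mono)
  then show ?thesis
    unfolding hyp0F1_term_Suc[OF assms(1)] by (metis mult.commute)
qed

lemma hyp0F1_ge_partial_sum:
  assumes "\<mu> > 0" "t \<ge> 0"
  shows "(\<Sum>n<k. hyp0F1_coeff \<mu> n * t ^ n) \<le> hyp0F1 \<mu> t"
  unfolding hyp0F1_def using assms hyp0F1_coeff_pos[OF assms(1)]
  by (intro sum_le_suminf summable_hyp0F1) (auto intro!: mult_nonneg_nonneg intro: less_imp_le)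

lemma hyp0F1_ge_1: "\<mu> > 0 \<Longrightarrow> t \<ge> 0 \<Longrightarrow> 1 \<le> hyp0F1 \<mu> t"
  using hyp0F1_ge_partial_sum[of \<mu> t 1] by simp

lemma hyp0F1_le_partial_sum:
  assumes "\<mu> > 0" "t \<ge> 0" "t \<le> (\<mu> + real k) * real (Suc k) / 2"
  shows "hyp0F1 \<mu> t \<le> (\<Sum>n<k. hyp0F1_coeff \<mu> n * t ^ n) + 2 * (hyp0F1_coeff \<mu> k * t ^ k)"
proof -
  define a where "a n = hyp0F1_coeff \<mu> n * t ^ n" for n
  have geometric: "a (n + k) \<le> a k * (1/2) ^ n" for n
  proof (induction n)
    case (Suc n)
    have "a (Suc n + k) \<le> 1/2 * a (n + k)"
      unfolding a_def using assms
      by (simp only: add_Suc) (rule hyp0F1_term_ratio_le, auto)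
    with Suc.IH show ?case by simp
  qed simp
  have summable: "summable a"
    unfolding a_def by (rule summable_hyp0F1[OF assms(1)])
  have "(\<Sum>n. a (n + k)) \<le> (\<Sum>n. a k * (1/2) ^ n)"
    using summable geometric by (intro suminf_le summable_mult summable_geometric)
      (auto simp: summable_iff_shift)
  also have "\<dots> = 2 * a k"
    using suminf_geometric[of "1/2::real"] by (simp add: suminf_mult)
  finally show ?thesis
    using suminf_split_initial_segment[OF summable, of k]
    unfolding hyp0F1_def a_def by simp
qed

lemma hyp0F1_neg_le_partial_sum:
  assumes "\<mu> > 0" "t \<ge> 0" "t \<le> (\<mu> + real k) * real (Suc k)" "odd k"
  shows "hyp0F1 \<mu> (-t) \<le> (\<Sum>n<k. hyp0F1_coeff \<mu> n * (-t) ^ n)"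
proof -
  define g where "g n = hyp0F1_coeff \<mu> n * (-t) ^ n" for n
  have summable: "summable g"
    unfolding g_def by (rule summable_hyp0F1[OF assms(1)])
  then have "(\<lambda>n. g (n + k)) sums (\<Sum>n. g (n + k))"
    by (simp add: summable_sums)
  then have grouped: "(\<lambda>n. \<Sum>i = n * 2..<n * 2 + 2. g (i + k)) sums (\<Sum>n. g (n + k))"
    by (rule sums_group) simp
  have pair_nonpos: "(\<Sum>i = n * 2..<n * 2 + 2. g (i + k)) \<le> 0" for n
  proof -
    define m where "m = 2 * n + k"
    have "{n * 2..<n * 2 + 2} = {2 * n, Suc (2 * n)}"
      by auto
    then have "(\<Sum>i = n * 2..<n * 2 + 2. g (i + k)) = g m + g (Suc m)"
      unfolding m_def by simp
    moreover have "odd m" unfolding m_def using assms(4) by simp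
    then have "g m = - (hyp0F1_coeff \<mu> m * t ^ m)" and "g (Suc m) = hyp0F1_coeff \<mu> (Suc m) * t ^ Suc m"
      unfolding g_def by simp_all
    moreover have "hyp0F1_coeff \<mu> (Suc m) * t ^ Suc m \<le> 1 * (hyp0F1_coeff \<mu> m * t ^ m)"
      using assms unfolding m_def by (intro hyp0F1_term_ratio_le) auto
    ultimately show ?thesis by linarith
  qed
  have "(\<Sum>n. g (n + k)) \<le> 0"
    by (rule sums_le[OF pair_nonpos grouped sums_zero])
  then show ?thesis
    using suminf_split_initial_segment[OF summable, of k]
    unfolding hyp0F1_def g_def by simp
qed

lemma hyp0F1_partial_sum_2: "(\<Sum>n<2. hyp0F1_coeff \<mu> n * t ^ n) = 1 + t / \<mu>"
  by (simp add: numeral_2_eq_2 hyp0F1_coeff_def)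

lemma hyp0F1_partial_sum_3:
  "(\<Sum>n<3. hyp0F1_coeff \<mu> n * t ^ n) = 1 + t / \<mu> + t\<^sup>2 / (2 * (\<mu> * (\<mu> + 1)))"
  by (simp add: numeral_3_eq_3 numeral_2_eq_2 hyp0F1_coeff_def pochhammer_Suc power2_eq_square
      mult_ac add_ac)

lemma hyp0F1_coeff_2: "hyp0F1_coeff \<mu> 2 = 1 / (2 * (\<mu> * (\<mu> + 1)))"
  by (simp add: numeral_2_eq_2 hyp0F1_coeff_def pochhammer_Suc mult_ac)

lemma hyp0F1_partial_sums_at_test_point:
  assumes "0 < \<mu>"
  shows "(\<Sum>n<3. hyp0F1_coeff \<mu> n * (\<mu> * (\<mu> + 1)) ^ n) = (\<mu>\<^sup>2 + 3 * \<mu> + 4) / 2"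
    and "(\<Sum>n<3. hyp0F1_coeff \<mu> n * (- (\<mu> * (\<mu> + 1))) ^ n) = \<mu> * (\<mu> - 1) / 2"
    and "(\<Sum>n<2. hyp0F1_coeff (\<mu> + 1) n * (\<mu> * (\<mu> + 1)) ^ n) = 1 + \<mu>"
    and "(\<Sum>n<2. hyp0F1_coeff (\<mu> + 1) n * (\<mu> * (\<mu> + 1)) ^ n)
           + 2 * (hyp0F1_coeff (\<mu> + 1) 2 * (\<mu> * (\<mu> + 1)) ^ 2) = (1 + \<mu>) * (\<mu>\<^sup>2 + \<mu> + 2) / (\<mu> + 2)"
proof -
  have cancel: "\<mu> * (\<mu> + 1) / \<mu> = \<mu> + 1" "\<mu> * (\<mu> + 1) / (\<mu> + 1) = \<mu>"
    using assms by simp_all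
  have "s\<^sup>2 / (2 * s) = s / 2" if "s \<noteq> 0" for s :: real
    using that by (simp add: power2_eq_square)
  then have square: "(\<mu> * (\<mu> + 1))\<^sup>2 / (2 * (\<mu> * (\<mu> + 1))) = \<mu> * (\<mu> + 1) / 2"
    using assms by simp
  have "2 * (1 / (2 * (s * r)) * (\<mu> * s)\<^sup>2) = \<mu>\<^sup>2 * s / r" if "s > 0" "r > 0" for s r
    using that by (simp add: power2_eq_square field_simps)
  then have term2: "2 * (hyp0F1_coeff (\<mu> + 1) 2 * (\<mu> * (\<mu> + 1)) ^ 2) = \<mu>\<^sup>2 * (\<mu> + 1) / (\<mu> + 2)"
    unfolding hyp0F1_coeff_2 using assms by (simp add: add.assoc)
  show "(\<Sum>n<3. hyp0F1_coeff \<mu> n * (\<mu> * (\<mu> + 1)) ^ n) = (\<mu>\<^sup>2 + 3 * \<mu> + 4) / 2"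
    unfolding hyp0F1_partial_sum_3 cancel square by (simp add: field_simps power2_eq_square)
  show "(\<Sum>n<3. hyp0F1_coeff \<mu> n * (- (\<mu> * (\<mu> + 1))) ^ n) = \<mu> * (\<mu> - 1) / 2"
    unfolding hyp0F1_partial_sum_3 power2_minus minus_divide_left[symmetric] cancel square
    by (simp add: field_simps power2_eq_square)
  show "(\<Sum>n<2. hyp0F1_coeff (\<mu> + 1) n * (\<mu> * (\<mu> + 1)) ^ n) = 1 + \<mu>"
    unfolding hyp0F1_partial_sum_2 cancel by simp
  have "\<mu> + 2 > 0" using assms by simp
  then show "(\<Sum>n<2. hyp0F1_coeff (\<mu> + 1) n * (\<mu> * (\<mu> + 1)) ^ n)
           + 2 * (hyp0F1_coeff (\<mu> + 1) 2 * (\<mu> * (\<mu> + 1)) ^ 2) = (1 + \<mu>) * (\<mu>\<^sup>2 + \<mu> + 2) / (\<mu> + 2)"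
    unfolding hyp0F1_partial_sum_2 cancel term2 by (simp add: field_simps power2_eq_square)
qed

lemma hyp0F1_bounds_at_test_point:
  assumes "0 < \<mu>" "\<mu> < 1/2"
  shows "(\<mu>\<^sup>2 + 3 * \<mu> + 4) / 2 \<le> hyp0F1 \<mu> (\<mu> * (\<mu> + 1))"
    and "1 + \<mu> \<le> hyp0F1 (\<mu> + 1) (\<mu> * (\<mu> + 1))"
    and "hyp0F1 (\<mu> + 1) (\<mu> * (\<mu> + 1)) \<le> (1 + \<mu>) * (\<mu>\<^sup>2 + \<mu> + 2) / (\<mu> + 2)"
    and "hyp0F1 \<mu> (- (\<mu> * (\<mu> + 1))) < 0"
proof -
  have small: "\<mu> * (\<mu> + 1) \<le> 1/2 * (3/2)"
    using assms by (intro mult_mono) auto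
  show "(\<mu>\<^sup>2 + 3 * \<mu> + 4) / 2 \<le> hyp0F1 \<mu> (\<mu> * (\<mu> + 1))"
    using hyp0F1_ge_partial_sum[of \<mu> "\<mu> * (\<mu> + 1)" 3] assms
    unfolding hyp0F1_partial_sums_at_test_point[OF assms(1)] by simp
  show "1 + \<mu> \<le> hyp0F1 (\<mu> + 1) (\<mu> * (\<mu> + 1))"
    using hyp0F1_ge_partial_sum[of "\<mu> + 1" "\<mu> * (\<mu> + 1)" 2] assms
    unfolding hyp0F1_partial_sums_at_test_point[OF assms(1)] by simp
  show "hyp0F1 (\<mu> + 1) (\<mu> * (\<mu> + 1)) \<le> (1 + \<mu>) * (\<mu>\<^sup>2 + \<mu> + 2) / (\<mu> + 2)"
    using hyp0F1_le_partial_sum[of "\<mu> + 1" "\<mu> * (\<mu> + 1)" 2] assms small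
    unfolding hyp0F1_partial_sums_at_test_point(4)[OF assms(1)] by simp
  have "hyp0F1 \<mu> (- (\<mu> * (\<mu> + 1))) \<le> \<mu> * (\<mu> - 1) / 2"
    using hyp0F1_neg_le_partial_sum[of \<mu> "\<mu> * (\<mu> + 1)" 3] assms small
    unfolding hyp0F1_partial_sums_at_test_point[OF assms(1)] by simp
  also have "\<dots> < 0"
    using assms by (simp add: mult_pos_neg)
  finally show "hyp0F1 \<mu> (- (\<mu> * (\<mu> + 1))) < 0" .
qed

lemma test_point_quadratic_pos:
  fixes \<mu> F G :: real
  assumes \<mu>: "0 < \<mu>" "\<mu> < 1/2"
    and F: "(\<mu>\<^sup>2 + 3 * \<mu> + 4) / 2 \<le> F"
    and G: "1 + \<mu> \<le> G" "G \<le> (1 + \<mu>) * (\<mu>\<^sup>2 + \<mu> + 2) / (\<mu> + 2)"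
  shows "0 < 4 * \<mu>\<^sup>2 * F\<^sup>2 + 2 * (1 - 2 * \<mu>) * \<mu> * F * G - 4 * \<mu> * (\<mu> + 1) * G\<^sup>2"
proof -
  define Flo Glo g where "Flo = (\<mu>\<^sup>2 + 3 * \<mu> + 4) / 2" and "Glo = 1 + \<mu>"
    and "g = (1 + \<mu>) * (\<mu>\<^sup>2 + \<mu> + 2)"
  define p where "p = 6 + 2*\<mu> - 21/2*\<mu>^2 - 17*\<mu>^3 - 13*\<mu>^4 - 6*\<mu>^5 - 3/2*\<mu>^6"
  define s where "s = \<mu> + 2"
  have s: "s > 0" unfolding s_def using \<mu> by simp
  have p: "p > 0"
  proof -
    have "\<mu> ^ k \<le> (1/2) ^ k" for k
      using \<mu> by (intro power_mono) auto
    from this[of 2] this[of 3] this[of 4] this[of 5] this[of 6] show ?thesis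
      unfolding p_def using \<mu> by (simp add: power_divide)
  qed
  have "(4 * \<mu>\<^sup>2 * Flo\<^sup>2 + 2 * (1 - 2 * \<mu>) * \<mu> * Flo * Glo) * s\<^sup>2
          - 4 * \<mu> * (\<mu> + 1) * g\<^sup>2 = 2 * \<mu>\<^sup>2 * p"
    unfolding Flo_def Glo_def g_def p_def s_def by (simp add: field_simps eval_nat_numeral)
  then have lower: "0 < 4 * \<mu>\<^sup>2 * Flo\<^sup>2 + 2 * (1 - 2 * \<mu>) * \<mu> * Flo * Glo - 4 * \<mu> * (\<mu> + 1) * (g / s)\<^sup>2"
    using s p \<mu> by (simp add: field_simps power2_eq_square)
  have "0 < Flo" "0 < Glo"
    unfolding Flo_def Glo_def using \<mu> by (auto intro!: add_pos_pos)
  moreover have "Flo \<le> F" "Glo \<le> G" "G \<le> g / s"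
    using F G unfolding Flo_def Glo_def g_def s_def by simp_all
  ultimately have "4 * \<mu>\<^sup>2 * Flo\<^sup>2 + 2 * (1 - 2 * \<mu>) * \<mu> * Flo * Glo - 4 * \<mu> * (\<mu> + 1) * (g / s)\<^sup>2
      \<le> 4 * \<mu>\<^sup>2 * F\<^sup>2 + 2 * (1 - 2 * \<mu>) * \<mu> * F * G - 4 * \<mu> * (\<mu> + 1) * G\<^sup>2"
    using \<mu> by (intro diff_mono add_mono mult_left_mono mult_mono power_mono) auto
  with lower show ?thesis by linarith
qed


section \<open>Derivatives of the normalized Bessel function\<close>

lemma calI_eq_hyp0F1: "calI \<nu> x = hyp0F1 (\<nu> + 1) (x\<^sup>2 / 4)"
  unfolding calI_def hyp0F1_def hyp0F1_coeff_def
proof (rule arg_cong[where f = suminf], rule ext)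
  fix n
  have "(x\<^sup>2 / 4) ^ n = (1 / 4) ^ n * x ^ (2 * n)"
    by (simp add: power_mult power_divide)
  then show "(1 / 4) ^ n / (pochhammer (\<nu> + 1) n * fact n) * x ^ (2 * n)
               = 1 / (pochhammer (\<nu> + 1) n * fact n) * (x\<^sup>2 / 4) ^ n"
    by simp
qed

lemma besselJ_eq_hyp0F1:
  assumes "\<nu> > -1" "x > 0"
  shows "besselJ \<nu> x = (x / 2) powr \<nu> / Gamma (\<nu> + 1) * hyp0F1 (\<nu> + 1) (- (x\<^sup>2 / 4))"
proof -
  have Gamma: "Gamma (\<nu> + 1) > 0" using assms by simp
  have not_pole: "\<nu> + 1 \<notin> \<int>\<^sub>\<le>\<^sub>0" using assms by auto
  have term_eq: "(-1) ^ n / (fact n * Gamma (real n + \<nu> + 1)) * (x / 2) powr (2 * real n + \<nu>)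
          = (x / 2) powr \<nu> / Gamma (\<nu> + 1) * (hyp0F1_coeff (\<nu> + 1) n * (- (x\<^sup>2 / 4)) ^ n)" for n
  proof -
    have G: "Gamma (real n + \<nu> + 1) = pochhammer (\<nu> + 1) n * Gamma (\<nu> + 1)"
      using pochhammer_Gamma[OF not_pole, of n] Gamma by (simp add: field_simps)
    have P: "(x / 2) powr (2 * real n + \<nu>) = (x / 2) ^ (2 * n) * (x / 2) powr \<nu>"
      using assms by (simp add: powr_add powr_realpow[symmetric])
    have Q: "(- (x\<^sup>2 / 4)) ^ n = (-1) ^ n * (x / 2) ^ (2 * n)"
      by (simp add: power_mult power_divide power_minus[of "x\<^sup>2 / 4"])
    show ?thesis
      unfolding G P Q hyp0F1_coeff_def using Gamma pochhammer_pos[of "\<nu> + 1" n] assms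
      by (simp add: field_simps)
  qed
  show ?thesis
    unfolding besselJ_def term_eq hyp0F1_def
    by (rule suminf_mult) (rule summable_hyp0F1, use assms in simp)
qed

lemma besselJ_eq_0_iff:
  assumes "\<nu> > -1" "x > 0"
  shows "besselJ \<nu> x = 0 \<longleftrightarrow> hyp0F1 (\<nu> + 1) (- (x\<^sup>2 / 4)) = 0"
proof -
  have "Gamma (\<nu> + 1) > 0"
    using assms by simp
  then have "(x / 2) powr \<nu> / Gamma (\<nu> + 1) \<noteq> 0"
    using assms(2) by simp
  then show ?thesis
    unfolding besselJ_eq_hyp0F1[OF assms] by simp
qed

lemma calI_ge_1: "\<nu> > -1 \<Longrightarrow> 1 \<le> calI \<nu> x"
  unfolding calI_eq_hyp0F1 by (rule hyp0F1_ge_1) auto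

lemma calI_ge_quadratic: "\<nu> > -1 \<Longrightarrow> 1 + x\<^sup>2 / (4 * (\<nu> + 1)) \<le> calI \<nu> x"
  using hyp0F1_ge_partial_sum[of "\<nu> + 1" "x\<^sup>2 / 4" 2]
  unfolding calI_eq_hyp0F1 hyp0F1_partial_sum_2 by simp

lemma calI_has_real_derivative:
  assumes "\<nu> > -1"
  shows "(calI \<nu> has_real_derivative x * calI (\<nu> + 1) x / (2 * (\<nu> + 1))) (at x within S)"
proof -
  have "((\<lambda>x. hyp0F1 (\<nu> + 1) (x\<^sup>2 / 4)) has_real_derivative
          hyp0F1 (\<nu> + 1 + 1) (x\<^sup>2 / 4) / (\<nu> + 1) * (x / 2)) (at x within S)"
    using assms by (intro DERIV_chain2[OF hyp0F1_has_real_derivative]) (auto intro!: derivative_eq_intros)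
  then show ?thesis
    unfolding calI_eq_hyp0F1[abs_def] by (simp add: calI_eq_hyp0F1 field_simps)
qed

text \<open>At \<open>x = 0\<close> the stated derivative is \<open>\<dots> / 0 = 0\<close>, which is the true value.\<close>

lemma calI_succ_has_real_derivative:
  assumes "\<nu> > -1"
  shows "(calI (\<nu> + 1) has_real_derivative 2 * (\<nu> + 1) * (calI \<nu> x - calI (\<nu> + 1) x) / x) (at x)"
proof -
  define K where "K = calI (\<nu> + 2) x"
  have mu: "\<nu> + 1 \<noteq> 0" "\<nu> + 2 \<noteq> 0" using assms by auto
  have "calI \<nu> x - calI (\<nu> + 1) x = x\<^sup>2 * K / (4 * (\<nu> + 1) * (\<nu> + 2))"
    using hyp0F1_contiguous[of "\<nu> + 1" "x\<^sup>2 / 4"] assms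
    unfolding calI_eq_hyp0F1 K_def by (simp add: add.assoc field_simps)
  then have "x * K / (2 * (\<nu> + 2)) = 2 * (\<nu> + 1) * (calI \<nu> x - calI (\<nu> + 1) x) / x"
    using mu by (cases "x = 0") (simp_all add: divide_simps power2_eq_square, algebra)
  moreover have "(calI (\<nu> + 1) has_real_derivative x * K / (2 * (\<nu> + 2))) (at x)"
    using calI_has_real_derivative[of "\<nu> + 1" x] assms unfolding K_def by (simp add: add.assoc)
  ultimately show ?thesis by simp
qed


section \<open>The sign of the second logarithmic derivative\<close>

definition calI_log_curv :: "real \<Rightarrow> real \<Rightarrow> real" where
  "calI_log_curv \<nu> x =
     4 * (\<nu> + 1)\<^sup>2 * (calI \<nu> x)\<^sup>2 - 2 * (2 * \<nu> + 1) * (\<nu> + 1) * calI \<nu> x * calI (\<nu> + 1) x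
       - x\<^sup>2 * (calI (\<nu> + 1) x)\<^sup>2"

lemma ln_calI_has_real_derivative:
  assumes "\<nu> > -1"
  shows "((\<lambda>x. ln (calI \<nu> x)) has_real_derivative
           x * calI (\<nu> + 1) x / (2 * (\<nu> + 1) * calI \<nu> x)) (at x)"
proof -
  have "calI \<nu> x > 0"
    using calI_ge_1[OF assms, of x] by simp
  then have "((\<lambda>x. ln (calI \<nu> x)) has_real_derivative
               inverse (calI \<nu> x) * (x * calI (\<nu> + 1) x / (2 * (\<nu> + 1)))) (at x)"
    by (intro DERIV_chain2[OF DERIV_ln calI_has_real_derivative[OF assms]])
  then show ?thesis
    by (simp add: field_simps)
qed

lemma calI_log_deriv_has_real_derivative:
  assumes "\<nu> > -1" "x \<noteq> 0"
  shows "((\<lambda>x. x * calI (\<nu> + 1) x / (2 * (\<nu> + 1) * calI \<nu> x)) has_real_derivative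
           calI_log_curv \<nu> x / (2 * (\<nu> + 1) * calI \<nu> x)\<^sup>2) (at x)"
proof -
  define F G where "F = calI \<nu> x" and "G = calI (\<nu> + 1) x"
  have mu: "\<nu> + 1 \<noteq> 0" using assms by auto
  have "((\<lambda>x. x * calI (\<nu> + 1) x / (2 * (\<nu> + 1) * calI \<nu> x)) has_real_derivative
          ((1 * G + 2 * (\<nu> + 1) * (F - G) / x * x) * (2 * (\<nu> + 1) * F)
             - x * G * (2 * (\<nu> + 1) * (x * G / (2 * (\<nu> + 1)))))
          / (2 * (\<nu> + 1) * F * (2 * (\<nu> + 1) * F))) (at x)"
    unfolding F_def G_def using assms calI_ge_1[OF assms(1), of x]
    by (intro DERIV_divide DERIV_mult DERIV_cmult DERIV_ident
        calI_has_real_derivative calI_succ_has_real_derivative) auto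
  then show ?thesis
  proof (rule DERIV_cong)
    have cancel: "2 * (\<nu> + 1) * (x * G / (2 * (\<nu> + 1))) = x * G"
      "2 * (\<nu> + 1) * (F - G) / x * x = 2 * (\<nu> + 1) * (F - G)"
      using mu assms(2) by simp_all
    show "((1 * G + 2 * (\<nu> + 1) * (F - G) / x * x) * (2 * (\<nu> + 1) * F)
             - x * G * (2 * (\<nu> + 1) * (x * G / (2 * (\<nu> + 1)))))
          / (2 * (\<nu> + 1) * F * (2 * (\<nu> + 1) * F))
          = calI_log_curv \<nu> x / (2 * (\<nu> + 1) * calI \<nu> x)\<^sup>2"
      unfolding cancel calI_log_curv_def F_def[symmetric] G_def[symmetric]
      by (simp add: power2_eq_square algebra_simps)
  qed
qed

lemma calI_log_curv_has_real_derivative: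
  assumes "\<nu> > -1" "x \<noteq> 0"
  shows "(calI_log_curv \<nu> has_real_derivative
           (2 * \<nu> + 1) * (2 * (\<nu> + 1) * calI \<nu> x * calI (\<nu> + 1) x - calI_log_curv \<nu> x) / x) (at x)"
proof -
  define F G where "F = calI \<nu> x" and "G = calI (\<nu> + 1) x"
  define F' G' where "F' = x * G / (2 * (\<nu> + 1))" and "G' = 2 * (\<nu> + 1) * (F - G) / x"
  have F': "2 * (\<nu> + 1) * F' = x * G" and G': "x * G' = 2 * (\<nu> + 1) * (F - G)"
    unfolding F'_def G'_def using assms by auto
  have "(calI_log_curv \<nu> has_real_derivative
          4 * (\<nu> + 1)\<^sup>2 * (2 * F * F') - 2 * (2 * \<nu> + 1) * (\<nu> + 1) * (F' * G + F * G')
            - (2 * x * G\<^sup>2 + x\<^sup>2 * (2 * G * G'))) (at x)"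
  proof -
    have dF: "(calI \<nu> has_real_derivative F') (at x)"
      unfolding F'_def G_def by (rule calI_has_real_derivative[OF assms(1)])
    have dG: "(calI (\<nu> + 1) has_real_derivative G') (at x)"
      unfolding G'_def F_def G_def by (rule calI_succ_has_real_derivative[OF assms(1)])
    show ?thesis
      unfolding calI_log_curv_def[abs_def] F_def[symmetric] G_def[symmetric]
      by (rule derivative_eq_intros dF dG refl)+ (simp add: F_def G_def power2_eq_square algebra_simps)
  qed
  then show ?thesis
  proof (rule DERIV_cong)
    have "x * (4 * (\<nu> + 1)\<^sup>2 * (2 * F * F') - 2 * (2 * \<nu> + 1) * (\<nu> + 1) * (F' * G + F * G')
            - (2 * x * G\<^sup>2 + x\<^sup>2 * (2 * G * G')))
          = (2 * \<nu> + 1) * (2 * (\<nu> + 1) * F * G - calI_log_curv \<nu> x)"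
      unfolding calI_log_curv_def F_def[symmetric] G_def[symmetric] using F' G'
      by algebra
    then show "4 * (\<nu> + 1)\<^sup>2 * (2 * F * F') - 2 * (2 * \<nu> + 1) * (\<nu> + 1) * (F' * G + F * G')
            - (2 * x * G\<^sup>2 + x\<^sup>2 * (2 * G * G'))
          = (2 * \<nu> + 1) * (2 * (\<nu> + 1) * calI \<nu> x * calI (\<nu> + 1) x - calI_log_curv \<nu> x) / x"
      unfolding F_def G_def using assms(2) by (simp add: field_simps)
  qed
qed

lemma ln_calI_strict_convex_on:
  assumes "\<nu> > -1" "convex S" "S \<subseteq> {0<..}" "\<And>x. x \<in> S \<Longrightarrow> calI_log_curv \<nu> x > 0"
  shows "strict_convex_on S (\<lambda>x. ln (calI \<nu> x))"
proof (rule strict_convex_on_if_second_deriv_pos)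
  show "((\<lambda>x. ln (calI \<nu> x)) has_real_derivative
          x * calI (\<nu> + 1) x / (2 * (\<nu> + 1) * calI \<nu> x)) (at x)" for x
    by (rule ln_calI_has_real_derivative[OF assms(1)])
  show "((\<lambda>x. x * calI (\<nu> + 1) x / (2 * (\<nu> + 1) * calI \<nu> x)) has_real_derivative
          calI_log_curv \<nu> x / (2 * (\<nu> + 1) * calI \<nu> x)\<^sup>2) (at x)" if "x \<in> S" for x
    using that assms(3) by (intro calI_log_deriv_has_real_derivative[OF assms(1)]) auto
  show "calI_log_curv \<nu> x / (2 * (\<nu> + 1) * calI \<nu> x)\<^sup>2 > 0" if "x \<in> S" for x
    using assms(4)[OF that] calI_ge_1[OF assms(1), of x] assms(1) by simp
qed (fact assms(2))

lemma ln_calI_strict_concave_on: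
  assumes "\<nu> > -1" "convex S" "S \<subseteq> {0<..}" "\<And>x. x \<in> S \<Longrightarrow> calI_log_curv \<nu> x < 0"
  shows "strict_concave_on S (\<lambda>x. ln (calI \<nu> x))"
  unfolding strict_concave_on_def
proof (rule strict_convex_on_if_second_deriv_pos)
  show "((\<lambda>x. - ln (calI \<nu> x)) has_real_derivative
          - (x * calI (\<nu> + 1) x / (2 * (\<nu> + 1) * calI \<nu> x))) (at x)" for x
    by (intro DERIV_minus ln_calI_has_real_derivative[OF assms(1)])
  show "((\<lambda>x. - (x * calI (\<nu> + 1) x / (2 * (\<nu> + 1) * calI \<nu> x))) has_real_derivative
          - (calI_log_curv \<nu> x / (2 * (\<nu> + 1) * calI \<nu> x)\<^sup>2)) (at x)" if "x \<in> S" for x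
    using that assms(3) by (intro DERIV_minus calI_log_deriv_has_real_derivative[OF assms(1)]) auto
  show "- (calI_log_curv \<nu> x / (2 * (\<nu> + 1) * calI \<nu> x)\<^sup>2) > 0" if "x \<in> S" for x
    using assms(4)[OF that] calI_ge_1[OF assms(1), of x] assms(1) by (simp add: divide_neg_pos)
qed (fact assms(2))

lemma calI_log_curv_pos_at_test_point:
  assumes "-1 < \<nu>" "\<nu> < -1/2"
  shows "calI_log_curv \<nu> (2 * sqrt ((\<nu> + 1) * (\<nu> + 2))) > 0"
proof -
  define \<mu> where "\<mu> = \<nu> + 1"
  have \<mu>: "0 < \<mu>" "\<mu> < 1/2" using assms unfolding \<mu>_def by auto
  define x where "x = 2 * sqrt (\<mu> * (\<mu> + 1))"
  have x2: "x\<^sup>2 / 4 = \<mu> * (\<mu> + 1)"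
    unfolding x_def using \<mu> by (simp add: power_mult_distrib)
  have "calI_log_curv \<nu> x
          = 4 * \<mu>\<^sup>2 * (hyp0F1 \<mu> (\<mu> * (\<mu> + 1)))\<^sup>2
            + 2 * (1 - 2 * \<mu>) * \<mu> * hyp0F1 \<mu> (\<mu> * (\<mu> + 1)) * hyp0F1 (\<mu> + 1) (\<mu> * (\<mu> + 1))
            - 4 * \<mu> * (\<mu> + 1) * (hyp0F1 (\<mu> + 1) (\<mu> * (\<mu> + 1)))\<^sup>2"
    unfolding calI_log_curv_def calI_eq_hyp0F1 x2 \<mu>_def[symmetric]
    using x2 by (simp add: \<mu>_def algebra_simps)
  also have "\<dots> > 0"
    using hyp0F1_bounds_at_test_point[OF \<mu>] by (intro test_point_quadratic_pos[OF \<mu>])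
  finally show ?thesis
    unfolding x_def \<mu>_def by (simp add: add.assoc)
qed

definition calI_log_curv_weighted :: "real \<Rightarrow> real \<Rightarrow> real" where
  "calI_log_curv_weighted \<nu> x = x powr (2 * \<nu> + 1) * calI_log_curv \<nu> x"

lemma calI_log_curv_weighted_has_real_derivative:
  assumes "\<nu> > -1" "x > 0"
  shows "(calI_log_curv_weighted \<nu> has_real_derivative
           2 * (2 * \<nu> + 1) * (\<nu> + 1) * x powr (2 * \<nu>) * calI \<nu> x * calI (\<nu> + 1) x) (at x)"
proof -
  have "(calI_log_curv_weighted \<nu> has_real_derivative
          (2 * \<nu> + 1) * x powr (2 * \<nu> + 1 - 1) * calI_log_curv \<nu> x
          + (2 * \<nu> + 1) * (2 * (\<nu> + 1) * calI \<nu> x * calI (\<nu> + 1) x - calI_log_curv \<nu> x) / x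
            * x powr (2 * \<nu> + 1)) (at x)"
    unfolding calI_log_curv_weighted_def[abs_def] using assms
    by (intro DERIV_mult has_real_derivative_powr calI_log_curv_has_real_derivative) auto
  then show ?thesis
  proof (rule DERIV_cong)
    have "x powr (2 * \<nu> + 1) = x powr (2 * \<nu>) * x"
      using assms by (simp add: powr_add)
    then show "(2 * \<nu> + 1) * x powr (2 * \<nu> + 1 - 1) * calI_log_curv \<nu> x
          + (2 * \<nu> + 1) * (2 * (\<nu> + 1) * calI \<nu> x * calI (\<nu> + 1) x - calI_log_curv \<nu> x) / x
            * x powr (2 * \<nu> + 1)
        = 2 * (2 * \<nu> + 1) * (\<nu> + 1) * x powr (2 * \<nu>) * calI \<nu> x * calI (\<nu> + 1) x"
      using assms by (simp add: field_simps)
  qed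
qed

lemma calI_log_curv_weighted_strict_antimono:
  assumes "-1 < \<nu>" "\<nu> < -1/2" "0 < x" "x < y"
  shows "calI_log_curv_weighted \<nu> y < calI_log_curv_weighted \<nu> x"
proof (rule DERIV_neg_imp_decreasing[OF assms(4)])
  fix t assume t: "x \<le> t" "t \<le> y"
  then have "0 < t" using assms by simp
  moreover have "0 < calI \<nu> t" "0 < calI (\<nu> + 1) t"
    using calI_ge_1[of \<nu> t] calI_ge_1[of "\<nu> + 1" t] assms by auto
  ultimately have "2 * (2 * \<nu> + 1) * (\<nu> + 1) * t powr (2 * \<nu>) * calI \<nu> t * calI (\<nu> + 1) t < 0"
    using assms by (simp add: mult_neg_pos mult_pos_neg zero_less_mult_iff mult_less_0_iff)
  then show "\<exists>D. (calI_log_curv_weighted \<nu> has_real_derivative D) (at t) \<and> D < 0"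
    using calI_log_curv_weighted_has_real_derivative[OF assms(1) \<open>0 < t\<close>] by blast
qed

lemma calI_log_curv_weighted_deriv_le:
  assumes "-1 < \<nu>" "\<nu> < -1/2" "1 \<le> t"
  shows "2 * (2 * \<nu> + 1) * (\<nu> + 1) * t powr (2 * \<nu>) * calI \<nu> t * calI (\<nu> + 1) t
           \<le> (2 * \<nu> + 1) / 2"
proof -
  have "calI \<nu> t * 1 \<le> calI \<nu> t * calI (\<nu> + 1) t"
    using calI_ge_1[of \<nu> t] calI_ge_1[of "\<nu> + 1" t] assms by (intro mult_left_mono) auto
  then have FG: "t\<^sup>2 / (4 * (\<nu> + 1)) \<le> calI \<nu> t * calI (\<nu> + 1) t"
    using calI_ge_quadratic[OF assms(1), of t] by simp
  have "1 \<le> t powr (2 * \<nu> + 2)"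
    using assms by (intro ge_one_powr_ge_zero) auto
  also have "t powr (2 * \<nu> + 2) = t powr (2 * \<nu>) * t\<^sup>2"
    using assms by (simp add: powr_add powr_realpow)
  moreover have "2 * (\<nu> + 1) * t powr (2 * \<nu>) * (t\<^sup>2 / (4 * (\<nu> + 1))) = t powr (2 * \<nu>) * t\<^sup>2 / 2"
    using assms by (simp add: field_simps)
  ultimately have "1/2 \<le> 2 * (\<nu> + 1) * t powr (2 * \<nu>) * (t\<^sup>2 / (4 * (\<nu> + 1)))"
    by simp
  also have "\<dots> \<le> 2 * (\<nu> + 1) * t powr (2 * \<nu>) * (calI \<nu> t * calI (\<nu> + 1) t)"
    using FG assms by (intro mult_left_mono) auto
  finally have "(2 * \<nu> + 1) * (2 * (\<nu> + 1) * t powr (2 * \<nu>) * (calI \<nu> t * calI (\<nu> + 1) t))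
                  \<le> (2 * \<nu> + 1) * (1/2)"
    using assms by (intro mult_left_mono_neg) auto
  then show ?thesis
    by (simp add: algebra_simps)
qed

lemma calI_log_curv_weighted_eventually_neg:
  assumes "-1 < \<nu>" "\<nu> < -1/2"
  shows "\<exists>b > a. calI_log_curv_weighted \<nu> b < 0"
proof -
  have "\<exists>b > max a 1. calI_log_curv_weighted \<nu> b < 0"
  proof (rule exists_neg_if_deriv_le_neg)
    show "- (2 * \<nu> + 1) / 2 > 0"
      using assms by simp
    show "(calI_log_curv_weighted \<nu> has_real_derivative
            2 * (2 * \<nu> + 1) * (\<nu> + 1) * t powr (2 * \<nu>) * calI \<nu> t * calI (\<nu> + 1) t) (at t)"
      if "max a 1 \<le> t" for t
      using that assms by (intro calI_log_curv_weighted_has_real_derivative) auto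
    show "2 * (2 * \<nu> + 1) * (\<nu> + 1) * t powr (2 * \<nu>) * calI \<nu> t * calI (\<nu> + 1) t
            \<le> - (- (2 * \<nu> + 1) / 2)" if "max a 1 \<le> t" for t
      using calI_log_curv_weighted_deriv_le[OF assms, of t] that by linarith
  qed
  then show ?thesis
    by force
qed

lemma calI_log_curv_sign_change:
  assumes "-1 < \<nu>" "\<nu> < -1/2"
  obtains z where "2 * sqrt ((\<nu> + 1) * (\<nu> + 2)) < z"
    "\<And>x. 0 < x \<Longrightarrow> x < z \<Longrightarrow> calI_log_curv \<nu> x > 0"
    "\<And>x. z < x \<Longrightarrow> calI_log_curv \<nu> x < 0"
proof -
  define a where "a = 2 * sqrt ((\<nu> + 1) * (\<nu> + 2))"
  have "0 < a"
    unfolding a_def using assms by simp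
  moreover have "calI_log_curv \<nu> a > 0"
    unfolding a_def by (rule calI_log_curv_pos_at_test_point[OF assms])
  ultimately have "calI_log_curv_weighted \<nu> a > 0"
    unfolding calI_log_curv_weighted_def by simp
  moreover obtain b where "a < b" "calI_log_curv_weighted \<nu> b < 0"
    using calI_log_curv_weighted_eventually_neg[OF assms] by blast
  moreover have "continuous_on {a..b} (calI_log_curv_weighted \<nu>)"
  proof (intro continuous_at_imp_continuous_on ballI)
    fix x assume "x \<in> {a..b}"
    with \<open>0 < a\<close> have "0 < x" by simp
    then show "isCont (calI_log_curv_weighted \<nu>) x"
      by (rule DERIV_isCont[OF calI_log_curv_weighted_has_real_derivative[OF assms(1)]])
  qed
  ultimately obtain z where z: "a < z"
    "\<And>x. 0 < x \<Longrightarrow> x < z \<Longrightarrow> calI_log_curv_weighted \<nu> x > 0"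
    "\<And>x. z < x \<Longrightarrow> calI_log_curv_weighted \<nu> x < 0"
    using sign_change_if_strict_antimono[of "calI_log_curv_weighted \<nu>" a b]
      calI_log_curv_weighted_strict_antimono[OF assms] \<open>0 < a\<close> by (metis less_imp_le)
  show ?thesis
  proof (rule that)
    show "2 * sqrt ((\<nu> + 1) * (\<nu> + 2)) < z"
      using z(1) unfolding a_def .
    show "calI_log_curv \<nu> x > 0" if "0 < x" "x < z" for x
      using z(2)[OF that] that unfolding calI_log_curv_weighted_def by (simp add: zero_less_mult_iff)
    show "calI_log_curv \<nu> x < 0" if "z < x" for x
      using z(3)[OF that] that \<open>a < z\<close> \<open>0 < a\<close> unfolding calI_log_curv_weighted_def
      by (simp add: mult_less_0_iff)
  qed
qed


section \<open>The first zero of the Bessel function\<close>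

lemma first_zero_J_eqI:
  assumes "0 < j" "besselJ \<nu> j = 0" "\<And>x. 0 < x \<Longrightarrow> x < j \<Longrightarrow> besselJ \<nu> x \<noteq> 0"
  shows "first_zero_J \<nu> = j"
  unfolding first_zero_J_def
proof (rule the_equality)
  fix j' assume j': "0 < j' \<and> besselJ \<nu> j' = 0 \<and> (\<forall>x. 0 < x \<and> x < j' \<longrightarrow> besselJ \<nu> x \<noteq> 0)"
  show "j' = j"
  proof (rule ccontr)
    assume "j' \<noteq> j"
    then consider "j' < j" | "j < j'" by linarith
    then show False
      using assms j' by cases auto
  qed
qed (use assms in auto)

lemma first_zero_J_le:
  assumes "-1 < \<nu>" "\<nu> < -1/2"
  shows "first_zero_J \<nu> \<le> 2 * sqrt ((\<nu> + 1) * (\<nu> + 2))"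
proof -
  define \<mu> where "\<mu> = \<nu> + 1"
  have \<mu>: "0 < \<mu>" "\<mu> < 1/2" using assms unfolding \<mu>_def by auto
  define g where "g x = hyp0F1 \<mu> (- (x\<^sup>2 / 4))" for x
  define w where "w = 2 * sqrt (\<mu> * (\<mu> + 1))"
  have "w\<^sup>2 / 4 = \<mu> * (\<mu> + 1)"
    unfolding w_def using \<mu> by (simp add: power_mult_distrib)
  then have neg: "g w < 0"
    unfolding g_def using hyp0F1_bounds_at_test_point(4)[OF \<mu>] by simp
  have pos: "g 0 > 0"
    unfolding g_def using hyp0F1_ge_1[OF \<mu>(1), of 0] by simp
  have cont: "continuous_on {0..w} g"
    unfolding g_def by (intro continuous_on_compose2[OF continuous_on_hyp0F1[OF \<mu>(1)]]
      continuous_intros) auto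
  have "0 \<le> w" unfolding w_def using \<mu> by simp
  then obtain j where j: "0 < j" "j \<le> w" "g j = 0" "\<And>x. 0 < x \<Longrightarrow> x < j \<Longrightarrow> g x \<noteq> 0"
    using continuous_on_first_root[OF cont _ pos neg] by blast
  then have "first_zero_J \<nu> = j"
    using besselJ_eq_0_iff[OF assms(1)] unfolding g_def \<mu>_def by (intro first_zero_J_eqI) auto
  with j(2) show ?thesis
    unfolding w_def \<mu>_def by (simp add: add.assoc)
qed

theorem mainTheorem12:
  fixes \<nu> :: real
  assumes "-1 < \<nu>" and "\<nu> < -1/2"
  shows "\<exists>z. z \<ge> first_zero_J \<nu> \<and>
           strict_convex_on {0<..<z} (\<lambda>x. ln (calI \<nu> x)) \<and>
           strict_concave_on {z<..} (\<lambda>x. ln (calI \<nu> x))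
         \<and> \<not> convex_on UNIV (\<lambda>x. ln (calI \<nu> x))"
proof -
  obtain z where z: "2 * sqrt ((\<nu> + 1) * (\<nu> + 2)) < z"
    "\<And>x. 0 < x \<Longrightarrow> x < z \<Longrightarrow> calI_log_curv \<nu> x > 0"
    "\<And>x. z < x \<Longrightarrow> calI_log_curv \<nu> x < 0"
    using calI_log_curv_sign_change[OF assms] by blast
  have "0 \<le> sqrt ((\<nu> + 1) * (\<nu> + 2))"
    using assms by simp
  with z(1) have "0 < z" by linarith
  have "strict_convex_on {0<..<z} (\<lambda>x. ln (calI \<nu> x))"
    using z(2) assms(1) by (intro ln_calI_strict_convex_on) auto
  moreover have concave: "strict_concave_on {z<..} (\<lambda>x. ln (calI \<nu> x))"
    using z(3) assms(1) \<open>0 < z\<close> by (intro ln_calI_strict_concave_on) auto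
  moreover have "\<not> convex_on UNIV (\<lambda>x. ln (calI \<nu> x))"
    by (rule strict_concave_on_imp_not_convex_on[OF concave, of "z + 1" "z + 2"]) auto
  moreover have "first_zero_J \<nu> \<le> z"
    using first_zero_J_le[OF assms] z(1) by simp
  ultimately show ?thesis
    by blast
qed

end
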